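(* Let $n\ge 1$ and let $A = \begin{bmatrix} 0_n & I_n \\ 0_n & 0_n \end{bmatrix}$, $C = \begin{bmatrix} I_n & 0_n \end{bmatrix}$, $E = \begin{bmatrix} 0_n \\ I_n \end{bmatrix}$. Let $\kappa,\gamma>0$, and suppose $P\in\mathbb{R}^{2n\times 2n}$ is symmetric positive definite and $W\in\mathbb{R}^{2n\times n}$ is such that $$\begin{bmatrix} \Lambda & PE \\ E^\top P & -\gamma^2 I_n\end{bmatrix} < 0,\qquad \Lambda = P(\kappa I_{2n}+A) + (\kappa I_{2n}+A)^\top P + I_{2n} - WC - C^\top W^\top.$$ Partition $P = \begin{bmatrix} P_{11} & P_{12} \\ P_{12}^\top & P_{22}\end{bmatrix}$ with $P_{11},P_{12},P_{22}\in\mathbb{R}^{n\times n}$. Then $P_{11}>0$, $P_{22}>0$, and $P_{12}$ is non-singular and Hurwitz.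
   Context: $>0$ / $<0$ for symmetric matrices denote positive / negative definiteness. A square matrix is Hurwitz if all its eigenvalues have strictly negative real part. *)

theory Defs
  imports "Jordan_Normal_Form.Matrix" "Jordan_Normal_Form.Char_Poly"
begin

definition pos_def_mat :: "real mat \<Rightarrow> bool" where
  "pos_def_mat M \<longleftrightarrow> (\<exists>m. M \<in> carrier_mat m m) \<and> M = transpose_mat M \<and>
     (\<forall>x \<in> carrier_vec (dim_row M). x \<noteq> 0\<^sub>v (dim_row M) \<longrightarrow> x \<bullet> (M *\<^sub>v x) > 0)"

definition neg_def_mat :: "real mat \<Rightarrow> bool" where
  "neg_def_mat M \<longleftrightarrow> (\<exists>m. M \<in> carrier_mat m m) \<and> M = transpose_mat M \<and>
     (\<forall>x \<in> carrier_vec (dim_row M). x \<noteq> 0\<^sub>v (dim_row M) \<longrightarrow> x \<bullet> (M *\<^sub>v x) < 0)"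

definition hurwitz_mat :: "real mat \<Rightarrow> bool" where
  "hurwitz_mat M \<longleftrightarrow> (\<exists>m. M \<in> carrier_mat m m) \<and>
     (\<forall>k. eigenvalue (map_mat complex_of_real M) k \<longrightarrow> Re k < 0)"

definition A_mat :: "nat \<Rightarrow> real mat" where
  "A_mat n = four_block_mat (0\<^sub>m n n) (1\<^sub>m n) (0\<^sub>m n n) (0\<^sub>m n n)"

definition C_mat :: "nat \<Rightarrow> real mat" where
  "C_mat n = mat n (2*n) (\<lambda>(i,j). if j = i then 1 else 0)"

definition E_mat :: "nat \<Rightarrow> real mat" where
  "E_mat n = mat (2*n) n (\<lambda>(i,j). if i = j + n then 1 else 0)"

end

theory Submission
  imports Defs
begin

(* The direction y = (0, x) is invisible to C, and A maps it to (x, 0). Hence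
   0 > y^T \<Lambda> y = 2 \<kappa> x^T P22 x + 2 x^T P12 x + x^T x, and since P22 > 0 the quadratic
   form of P12 is negative definite. Such a matrix has trivial kernel, and for a complex
   eigenpair (k, a + i b) one gets Re k (a^T a + b^T b) = a^T P12 a + b^T P12 b < 0. *)

lemma append_vec_eq_zero_iff:
  assumes "x \<in> carrier_vec n" "y \<in> carrier_vec m"
  shows "x @\<^sub>v y = 0\<^sub>v (n + m) \<longleftrightarrow> x = 0\<^sub>v n \<and> y = 0\<^sub>v m"
proof -
  have "0\<^sub>v (n + m) = 0\<^sub>v n @\<^sub>v (0\<^sub>v m :: 'a vec)" by auto
  then show ?thesis using assms by simp
qed

lemma four_block_mat_quadratic_form_upper:
  fixes A :: "'a :: comm_ring_1 mat"
  assumes "A \<in> carrier_mat n n" "B \<in> carrier_mat n m" "C \<in> carrier_mat m n" "D \<in> carrier_mat m m"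
    and "x \<in> carrier_vec n"
  shows "(x @\<^sub>v 0\<^sub>v m) \<bullet> (four_block_mat A B C D *\<^sub>v (x @\<^sub>v 0\<^sub>v m)) = x \<bullet> (A *\<^sub>v x)"
proof -
  have "B *\<^sub>v 0\<^sub>v m = 0\<^sub>v n" using assms(2) by auto
  then show ?thesis
    using assms by (simp add: four_block_mat_mult_vec[of A n n B m C m D] scalar_prod_append[of _ n _ m])
qed

lemma four_block_mat_quadratic_form_lower:
  fixes A :: "'a :: comm_ring_1 mat"
  assumes "A \<in> carrier_mat n n" "B \<in> carrier_mat n m" "C \<in> carrier_mat m n" "D \<in> carrier_mat m m"
    and "x \<in> carrier_vec m"
  shows "(0\<^sub>v n @\<^sub>v x) \<bullet> (four_block_mat A B C D *\<^sub>v (0\<^sub>v n @\<^sub>v x)) = x \<bullet> (D *\<^sub>v x)"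
proof -
  have "C *\<^sub>v 0\<^sub>v n = 0\<^sub>v m" using assms(3) by auto
  then show ?thesis
    using assms by (simp add: four_block_mat_mult_vec[of A n n B m C m D] scalar_prod_append[of _ n _ m])
qed

lemma four_block_mat_symmetric_diagonal_blocks:
  assumes "A \<in> carrier_mat n n" "B \<in> carrier_mat n m" "C \<in> carrier_mat m n" "D \<in> carrier_mat m m"
    and "four_block_mat A B C D = transpose_mat (four_block_mat A B C D)"
  shows "A = transpose_mat A" "D = transpose_mat D"
proof -
  let ?M = "four_block_mat A B C D"
  have sym: "?M $$ (i, j) = ?M $$ (j, i)" if "i < n + m" "j < n + m" for i j
    using assms(1-4) that by (subst assms(5)) simp
  show "A = transpose_mat A"
  proof (rule eq_matI)
    fix i j assume "i < dim_row (transpose_mat A)" "j < dim_col (transpose_mat A)"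
    then have ij: "i < n" "j < n" using assms(1) by auto
    have "A $$ (i, j) = ?M $$ (i, j)" using assms(1-4) ij by simp
    also have "\<dots> = ?M $$ (j, i)" using sym ij by simp
    also have "\<dots> = A $$ (j, i)" using assms(1-4) ij by simp
    finally show "A $$ (i, j) = transpose_mat A $$ (i, j)" using assms(1) ij by simp
  qed (use assms(1) in auto)
  show "D = transpose_mat D"
  proof (rule eq_matI)
    fix i j assume "i < dim_row (transpose_mat D)" "j < dim_col (transpose_mat D)"
    then have ij: "i < m" "j < m" using assms(4) by auto
    have "D $$ (i, j) = ?M $$ (n + i, n + j)" using assms(1-4) ij by simp
    also have "\<dots> = ?M $$ (n + j, n + i)" using sym ij by simp
    also have "\<dots> = D $$ (j, i)" using assms(1-4) ij by simp
    finally show "D $$ (i, j) = transpose_mat D $$ (i, j)" using assms(4) ij by simp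
  qed (use assms(4) in auto)
qed

lemma pos_def_mat_four_block_mat:
  assumes M: "pos_def_mat (four_block_mat A B C D)"
    and blocks: "A \<in> carrier_mat n n" "B \<in> carrier_mat n m" "C \<in> carrier_mat m n" "D \<in> carrier_mat m m"
  shows "pos_def_mat A" "pos_def_mat D"
proof -
  let ?M = "four_block_mat A B C D"
  have pos: "v \<bullet> (?M *\<^sub>v v) > 0" if "v \<in> carrier_vec (n + m)" "v \<noteq> 0\<^sub>v (n + m)" for v
    using M blocks that unfolding pos_def_mat_def by auto
  have "?M = transpose_mat ?M" using M unfolding pos_def_mat_def by blast
  note sym = four_block_mat_symmetric_diagonal_blocks[OF blocks this]
  have "x \<bullet> (A *\<^sub>v x) > 0" if x: "x \<in> carrier_vec n" "x \<noteq> 0\<^sub>v n" for x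
    using pos[of "x @\<^sub>v 0\<^sub>v m"] x
    unfolding four_block_mat_quadratic_form_upper[OF blocks x(1)] append_vec_eq_zero_iff[OF x(1) zero_carrier_vec]
    by simp
  then show "pos_def_mat A" using blocks(1) sym(1) unfolding pos_def_mat_def by auto
  have "x \<bullet> (D *\<^sub>v x) > 0" if x: "x \<in> carrier_vec m" "x \<noteq> 0\<^sub>v m" for x
    using pos[of "0\<^sub>v n @\<^sub>v x"] x
    unfolding four_block_mat_quadratic_form_lower[OF blocks x(1)] append_vec_eq_zero_iff[OF zero_carrier_vec x(1)]
    by simp
  then show "pos_def_mat D" using blocks(4) sym(2) unfolding pos_def_mat_def by auto
qed

lemma neg_def_mat_four_block_mat:
  assumes M: "neg_def_mat (four_block_mat A B C D)"
    and blocks: "A \<in> carrier_mat n n" "B \<in> carrier_mat n m" "C \<in> carrier_mat m n" "D \<in> carrier_mat m m"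
  shows "neg_def_mat A"
proof -
  let ?M = "four_block_mat A B C D"
  have neg: "v \<bullet> (?M *\<^sub>v v) < 0" if "v \<in> carrier_vec (n + m)" "v \<noteq> 0\<^sub>v (n + m)" for v
    using M blocks that unfolding neg_def_mat_def by auto
  have "?M = transpose_mat ?M" using M unfolding neg_def_mat_def by blast
  note sym = four_block_mat_symmetric_diagonal_blocks[OF blocks this]
  have "x \<bullet> (A *\<^sub>v x) < 0" if x: "x \<in> carrier_vec n" "x \<noteq> 0\<^sub>v n" for x
    using neg[of "x @\<^sub>v 0\<^sub>v m"] x
    unfolding four_block_mat_quadratic_form_upper[OF blocks x(1)] append_vec_eq_zero_iff[OF x(1) zero_carrier_vec]
    by simp
  then show ?thesis using blocks(1) sym(1) unfolding neg_def_mat_def by auto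
qed

lemma quadratic_form_add:
  fixes M :: "'a :: comm_ring_1 mat"
  assumes "M \<in> carrier_mat n n" "N \<in> carrier_mat n n" "y \<in> carrier_vec n"
  shows "y \<bullet> ((M + N) *\<^sub>v y) = y \<bullet> (M *\<^sub>v y) + y \<bullet> (N *\<^sub>v y)"
  using assms by (simp add: add_mult_distrib_mat_vec[of M n n] scalar_prod_add_distrib[of y n])

lemma quadratic_form_diff:
  fixes M :: "'a :: comm_ring_1 mat"
  assumes "M \<in> carrier_mat n n" "N \<in> carrier_mat n n" "y \<in> carrier_vec n"
  shows "y \<bullet> ((M - N) *\<^sub>v y) = y \<bullet> (M *\<^sub>v y) - y \<bullet> (N *\<^sub>v y)"
  using assms by (simp add: minus_mult_distrib_mat_vec[of M n n] scalar_prod_minus_distrib[of y n])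

lemma quadratic_form_mult:
  fixes M :: "'a :: comm_ring_1 mat"
  assumes "M \<in> carrier_mat n k" "N \<in> carrier_mat k n" "y \<in> carrier_vec n"
  shows "y \<bullet> ((M * N) *\<^sub>v y) = (transpose_mat M *\<^sub>v y) \<bullet> (N *\<^sub>v y)"
  using assms by (simp add: transpose_vec_mult_scalar[of M n k])

lemma smult_one_mat_mult_vec:
  fixes v :: "'a :: comm_ring_1 vec"
  assumes "v \<in> carrier_vec n"
  shows "(c \<cdot>\<^sub>m 1\<^sub>m n) *\<^sub>v v = c \<cdot>\<^sub>v v"
proof (rule eq_vecI)
  fix i assume "i < dim_vec (c \<cdot>\<^sub>v v)"
  then have i: "i < n" using assms by simp
  have "((c \<cdot>\<^sub>m 1\<^sub>m n) *\<^sub>v v) $ i = (\<Sum>j\<in>{0..<n}. c * (if i = j then 1 else 0) * v $ j)"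
    using assms i by (auto simp: scalar_prod_def mult_mat_vec_def row_def)
  also have "\<dots> = c * v $ i" using i by (subst sum.remove[of _ i]) auto
  finally show "((c \<cdot>\<^sub>m 1\<^sub>m n) *\<^sub>v v) $ i = (c \<cdot>\<^sub>v v) $ i" using assms i by simp
qed (use assms in auto)

lemma A_mat_carrier: "A_mat n \<in> carrier_mat (2 * n) (2 * n)"
  by (simp add: A_mat_def mult_2)

lemma C_mat_carrier: "C_mat n \<in> carrier_mat n (2 * n)"
  by (simp add: C_mat_def)

lemma E_mat_carrier: "E_mat n \<in> carrier_mat (2 * n) n"
  by (simp add: E_mat_def)

lemma A_mat_mult_append:
  assumes "u \<in> carrier_vec n" "v \<in> carrier_vec n"
  shows "A_mat n *\<^sub>v (u @\<^sub>v v) = v @\<^sub>v 0\<^sub>v n"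
proof -
  have "0\<^sub>m n n *\<^sub>v u = 0\<^sub>v n" "0\<^sub>m n n *\<^sub>v v = 0\<^sub>v n" using assms by auto
  then show ?thesis
    unfolding A_mat_def using assms by (simp add: four_block_mat_mult_vec[of _ n n _ n _ n])
qed

lemma C_mat_mult_append:
  assumes "u \<in> carrier_vec n" "v \<in> carrier_vec n"
  shows "C_mat n *\<^sub>v (u @\<^sub>v v) = u"
proof (rule eq_vecI)
  fix i assume "i < dim_vec u"
  then have i: "i < n" using assms by simp
  have "(C_mat n *\<^sub>v (u @\<^sub>v v)) $ i = (\<Sum>j\<in>{0..<2 * n}. (if j = i then 1 else 0) * (u @\<^sub>v v) $ j)"
    using assms i by (simp add: C_mat_def mult_mat_vec_def scalar_prod_def mult_2)
  also have "\<dots> = (u @\<^sub>v v) $ i" using i by (subst sum.remove[of _ i]) auto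
  finally show "(C_mat n *\<^sub>v (u @\<^sub>v v)) $ i = u $ i" using assms i by simp
qed (use assms in \<open>simp add: C_mat_def\<close>)

definition Lambda_mat :: "nat \<Rightarrow> real \<Rightarrow> real mat \<Rightarrow> real mat \<Rightarrow> real mat" where
  "Lambda_mat n \<kappa> P W =
     P * (\<kappa> \<cdot>\<^sub>m 1\<^sub>m (2*n) + A_mat n) + transpose_mat (\<kappa> \<cdot>\<^sub>m 1\<^sub>m (2*n) + A_mat n) * P
     + 1\<^sub>m (2*n) - W * C_mat n - transpose_mat (C_mat n) * transpose_mat W"

lemma Lambda_mat_carrier:
  assumes "P \<in> carrier_mat (2 * n) (2 * n)" "W \<in> carrier_mat (2 * n) n"
  shows "Lambda_mat n \<kappa> P W \<in> carrier_mat (2 * n) (2 * n)"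
  using assms A_mat_carrier[of n] C_mat_carrier[of n] unfolding Lambda_mat_def by auto

lemma Lambda_mat_quadratic_form:
  assumes P: "P \<in> carrier_mat (2 * n) (2 * n)" "transpose_mat P = P"
    and W: "W \<in> carrier_mat (2 * n) n" and y: "y \<in> carrier_vec (2 * n)"
  shows "y \<bullet> (Lambda_mat n \<kappa> P W *\<^sub>v y) =
    2 * \<kappa> * (y \<bullet> (P *\<^sub>v y)) + 2 * ((P *\<^sub>v y) \<bullet> (A_mat n *\<^sub>v y)) + y \<bullet> y
    - 2 * ((transpose_mat W *\<^sub>v y) \<bullet> (C_mat n *\<^sub>v y))"
proof -
  define K where "K = \<kappa> \<cdot>\<^sub>m 1\<^sub>m (2 * n) + A_mat n"
  have A: "A_mat n \<in> carrier_mat (2 * n) (2 * n)" and C: "C_mat n \<in> carrier_mat n (2 * n)"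
    by (rule A_mat_carrier C_mat_carrier)+
  have K: "K \<in> carrier_mat (2 * n) (2 * n)" unfolding K_def using A by auto
  have Py: "P *\<^sub>v y \<in> carrier_vec (2 * n)" and Ay: "A_mat n *\<^sub>v y \<in> carrier_vec (2 * n)"
    and Cy: "C_mat n *\<^sub>v y \<in> carrier_vec n" and Wy: "transpose_mat W *\<^sub>v y \<in> carrier_vec n"
    using P W y A C by auto
  have Ky: "K *\<^sub>v y = \<kappa> \<cdot>\<^sub>v y + A_mat n *\<^sub>v y"
    unfolding K_def using y A
    by (simp add: add_mult_distrib_mat_vec[of _ "2 * n" "2 * n"] smult_one_mat_mult_vec)
  have "y \<bullet> (Lambda_mat n \<kappa> P W *\<^sub>v y) =
      y \<bullet> ((P * K) *\<^sub>v y) + y \<bullet> ((transpose_mat K * P) *\<^sub>v y) + y \<bullet> (1\<^sub>m (2 * n) *\<^sub>v y)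
      - y \<bullet> ((W * C_mat n) *\<^sub>v y) - y \<bullet> ((transpose_mat (C_mat n) * transpose_mat W) *\<^sub>v y)"
    unfolding Lambda_mat_def K_def[symmetric] using P W y K C
    by (simp add: quadratic_form_add[of _ "2 * n"] quadratic_form_diff[of _ "2 * n"] minus_carrier_mat
        del: assoc_mult_mat_vec)
  also have "\<dots> = (P *\<^sub>v y) \<bullet> (K *\<^sub>v y) + (K *\<^sub>v y) \<bullet> (P *\<^sub>v y) + y \<bullet> y
      - (transpose_mat W *\<^sub>v y) \<bullet> (C_mat n *\<^sub>v y) - (C_mat n *\<^sub>v y) \<bullet> (transpose_mat W *\<^sub>v y)"
    using quadratic_form_mult[OF P(1) K y] quadratic_form_mult[of "transpose_mat K" "2 * n" "2 * n" P y]
      quadratic_form_mult[of W "2 * n" n "C_mat n" y]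
      quadratic_form_mult[of "transpose_mat (C_mat n)" "2 * n" n "transpose_mat W" y]
      P W y K C by simp
  also have "\<dots> = 2 * ((P *\<^sub>v y) \<bullet> (K *\<^sub>v y)) + y \<bullet> y
      - 2 * ((transpose_mat W *\<^sub>v y) \<bullet> (C_mat n *\<^sub>v y))"
    using comm_scalar_prod[of "K *\<^sub>v y" "2 * n" "P *\<^sub>v y"] comm_scalar_prod[OF Cy Wy] K y Py by simp
  also have "(P *\<^sub>v y) \<bullet> (K *\<^sub>v y) = \<kappa> * (y \<bullet> (P *\<^sub>v y)) + (P *\<^sub>v y) \<bullet> (A_mat n *\<^sub>v y)"
    unfolding Ky using Py y Ay comm_scalar_prod[OF Py y]
    by (simp add: scalar_prod_add_distrib[of _ "2 * n"])
  finally show ?thesis by (simp add: algebra_simps)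
qed

lemma Lambda_mat_quadratic_form_unobserved:
  assumes P: "P = four_block_mat P11 P12 (transpose_mat P12) P22" "transpose_mat P = P"
    and blocks: "P11 \<in> carrier_mat n n" "P12 \<in> carrier_mat n n" "P22 \<in> carrier_mat n n"
    and W: "W \<in> carrier_mat (2 * n) n" and x: "x \<in> carrier_vec n"
  shows "(0\<^sub>v n @\<^sub>v x) \<bullet> (Lambda_mat n \<kappa> P W *\<^sub>v (0\<^sub>v n @\<^sub>v x)) =
    2 * \<kappa> * (x \<bullet> (P22 *\<^sub>v x)) + 2 * (x \<bullet> (P12 *\<^sub>v x)) + x \<bullet> x"
proof -
  let ?y = "0\<^sub>v n @\<^sub>v x"
  have y: "?y \<in> carrier_vec (2 * n)" using x by (simp add: mult_2)
  have P_carrier: "P \<in> carrier_mat (2 * n) (2 * n)" using P(1) blocks by (simp add: mult_2)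
  have "P11 *\<^sub>v 0\<^sub>v n = 0\<^sub>v n" "transpose_mat P12 *\<^sub>v 0\<^sub>v n = 0\<^sub>v n" using blocks by auto
  then have Py: "P *\<^sub>v ?y = (P12 *\<^sub>v x) @\<^sub>v (P22 *\<^sub>v x)"
    unfolding P(1) using blocks x by (simp add: four_block_mat_mult_vec[of _ n n _ n _ n])
  have "(P *\<^sub>v ?y) \<bullet> (A_mat n *\<^sub>v ?y) = (P12 *\<^sub>v x) \<bullet> x"
    unfolding Py A_mat_mult_append[OF zero_carrier_vec x] using blocks x
    by (simp add: scalar_prod_append[of _ n _ n])
  also have "\<dots> = x \<bullet> (P12 *\<^sub>v x)" using blocks x by (simp add: comm_scalar_prod[of _ n])
  finally have PA: "(P *\<^sub>v ?y) \<bullet> (A_mat n *\<^sub>v ?y) = x \<bullet> (P12 *\<^sub>v x)" .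
  have "?y \<bullet> (P *\<^sub>v ?y) = x \<bullet> (P22 *\<^sub>v x)"
    unfolding P(1) using blocks x by (simp add: four_block_mat_quadratic_form_lower)
  moreover have "?y \<bullet> ?y = x \<bullet> x" using x by (simp add: scalar_prod_append[of _ n _ n])
  moreover have "C_mat n *\<^sub>v ?y = 0\<^sub>v n" using x by (simp add: C_mat_mult_append)
  ultimately show ?thesis
    using Lambda_mat_quadratic_form[OF P_carrier P(2) W y] PA W y by simp
qed

lemma off_diagonal_block_quadratic_form_neg:
  assumes "\<kappa> > 0"
    and P: "P = four_block_mat P11 P12 (transpose_mat P12) P22" "pos_def_mat P"
    and blocks: "P11 \<in> carrier_mat n n" "P12 \<in> carrier_mat n n" "P22 \<in> carrier_mat n n"
    and W: "W \<in> carrier_mat (2 * n) n" and Lambda: "neg_def_mat (Lambda_mat n \<kappa> P W)"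
    and x: "x \<in> carrier_vec n" "x \<noteq> 0\<^sub>v n"
  shows "x \<bullet> (P12 *\<^sub>v x) < 0"
proof -
  let ?y = "0\<^sub>v n @\<^sub>v x"
  have P_carrier: "P \<in> carrier_mat (2 * n) (2 * n)" using P(1) blocks by (simp add: mult_2)
  have y: "?y \<in> carrier_vec (2 * n)" "?y \<noteq> 0\<^sub>v (2 * n)"
    using x append_vec_eq_zero_iff[OF zero_carrier_vec x(1)] by (auto simp: mult_2)
  have "dim_row (Lambda_mat n \<kappa> P W) = 2 * n"
    using Lambda_mat_carrier[OF P_carrier W] by blast
  then have "0 > ?y \<bullet> (Lambda_mat n \<kappa> P W *\<^sub>v ?y)"
    using Lambda y unfolding neg_def_mat_def by auto
  also have "?y \<bullet> (Lambda_mat n \<kappa> P W *\<^sub>v ?y) = 2 * \<kappa> * (x \<bullet> (P22 *\<^sub>v x)) + 2 * (x \<bullet> (P12 *\<^sub>v x)) + x \<bullet> x"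
    using P blocks W x by (intro Lambda_mat_quadratic_form_unobserved) (auto simp: pos_def_mat_def)
  finally have "2 * \<kappa> * (x \<bullet> (P22 *\<^sub>v x)) + 2 * (x \<bullet> (P12 *\<^sub>v x)) + x \<bullet> x < 0" .
  moreover have "x \<bullet> (P22 *\<^sub>v x) > 0"
    using pos_def_mat_four_block_mat(2)[OF P(2)[unfolded P(1)] blocks(1,2) _ blocks(3)] blocks x
    unfolding pos_def_mat_def by auto
  then have "2 * \<kappa> * (x \<bullet> (P22 *\<^sub>v x)) > 0" using \<open>\<kappa> > 0\<close> by simp
  moreover have "x \<bullet> x \<ge> 0" by (simp add: scalar_prod_def sum_nonneg)
  ultimately show ?thesis by linarith
qed

lemma det_neq_zero_if_quadratic_form_neg:
  fixes M :: "'a :: linordered_idom mat"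
  assumes "M \<in> carrier_mat n n" and "\<forall>x \<in> carrier_vec n. x \<noteq> 0\<^sub>v n \<longrightarrow> x \<bullet> (M *\<^sub>v x) < 0"
  shows "det M \<noteq> 0"
proof
  assume "det M = 0"
  then obtain v where "v \<in> carrier_vec n" "v \<noteq> 0\<^sub>v n" "M *\<^sub>v v = 0\<^sub>v n"
    using det_0_iff_vec_prod_zero[OF assms(1)] by blast
  then show False using assms(2) by force
qed

lemma Re_mult_mat_vec_of_real:
  assumes "M \<in> carrier_mat nr n" "v \<in> carrier_vec n"
  shows "map_vec Re (map_mat complex_of_real M *\<^sub>v v) = M *\<^sub>v map_vec Re v"
  using assms by (intro eq_vecI) (auto simp: mult_mat_vec_def scalar_prod_def)

lemma Im_mult_mat_vec_of_real:
  assumes "M \<in> carrier_mat nr n" "v \<in> carrier_vec n"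
  shows "map_vec Im (map_mat complex_of_real M *\<^sub>v v) = M *\<^sub>v map_vec Im v"
  using assms by (intro eq_vecI) (auto simp: mult_mat_vec_def scalar_prod_def)

lemma hurwitz_mat_if_quadratic_form_neg:
  assumes M: "M \<in> carrier_mat n n" and neg: "\<forall>x \<in> carrier_vec n. x \<noteq> 0\<^sub>v n \<longrightarrow> x \<bullet> (M *\<^sub>v x) < 0"
  shows "hurwitz_mat M"
  unfolding hurwitz_mat_def
proof (intro conjI allI impI)
  show "\<exists>m. M \<in> carrier_mat m m" using M by blast
  fix k assume "eigenvalue (map_mat complex_of_real M) k"
  then obtain v where v: "v \<in> carrier_vec n" "v \<noteq> 0\<^sub>v n" "map_mat complex_of_real M *\<^sub>v v = k \<cdot>\<^sub>v v"
    unfolding eigenvalue_def eigenvector_def using M by auto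
  define a where "a = map_vec Re v"
  define b where "b = map_vec Im v"
  have a: "a \<in> carrier_vec n" and b: "b \<in> carrier_vec n" using v(1) by (auto simp: a_def b_def)
  have "M *\<^sub>v a = map_vec Re (k \<cdot>\<^sub>v v)"
    unfolding a_def v(3)[symmetric] by (rule Re_mult_mat_vec_of_real[OF M v(1), symmetric])
  also have "\<dots> = Re k \<cdot>\<^sub>v a - Im k \<cdot>\<^sub>v b"
    using v(1) unfolding a_def b_def by (intro eq_vecI) auto
  finally have Ma: "M *\<^sub>v a = Re k \<cdot>\<^sub>v a - Im k \<cdot>\<^sub>v b" .
  have "M *\<^sub>v b = map_vec Im (k \<cdot>\<^sub>v v)"
    unfolding b_def v(3)[symmetric] by (rule Im_mult_mat_vec_of_real[OF M v(1), symmetric])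
  also have "\<dots> = Re k \<cdot>\<^sub>v b + Im k \<cdot>\<^sub>v a"
    using v(1) unfolding a_def b_def by (intro eq_vecI) (auto simp: algebra_simps)
  finally have Mb: "M *\<^sub>v b = Re k \<cdot>\<^sub>v b + Im k \<cdot>\<^sub>v a" .
  have "a \<noteq> 0\<^sub>v n \<or> b \<noteq> 0\<^sub>v n"
  proof (rule ccontr)
    assume "\<not> (a \<noteq> 0\<^sub>v n \<or> b \<noteq> 0\<^sub>v n)"
    then have "Re (v $ i) = 0 \<and> Im (v $ i) = 0" if "i < n" for i
      using v(1) that unfolding a_def b_def by (metis index_map_vec(1) index_zero_vec(1) carrier_vecD)
    then have "v = 0\<^sub>v n" using v(1) by (intro eq_vecI) (auto simp: complex_eq_iff)
    with v(2) show False ..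
  qed
  moreover have "x \<bullet> (M *\<^sub>v x) \<le> 0" if "x \<in> carrier_vec n" for x
    using neg that M by (cases "x = 0\<^sub>v n") force+
  ultimately have "a \<bullet> (M *\<^sub>v a) + b \<bullet> (M *\<^sub>v b) < 0"
    using neg a b by (meson add_neg_nonpos add_nonpos_neg)
  also have "a \<bullet> (M *\<^sub>v a) + b \<bullet> (M *\<^sub>v b) = Re k * (a \<bullet> a + b \<bullet> b)"
    unfolding Ma Mb using a b
    by (simp add: scalar_prod_minus_distrib[of _ n] scalar_prod_add_distrib[of _ n]
        comm_scalar_prod[of a n b] algebra_simps)
  finally have "Re k * (a \<bullet> a + b \<bullet> b) < 0" .
  moreover have "a \<bullet> a + b \<bullet> b \<ge> 0" by (simp add: scalar_prod_def sum_nonneg)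
  ultimately show "Re k < 0" by (meson mult_nonneg_nonneg not_less)
qed

theorem corollary1:
  fixes n :: nat and \<kappa> \<gamma> :: real
    and P W P11 P12 P22 :: "real mat"
  assumes "n \<ge> 1"
    and "\<kappa> > 0" and "\<gamma> > 0"
    and "P \<in> carrier_mat (2*n) (2*n)" and "pos_def_mat P"
    and "W \<in> carrier_mat (2*n) n"
    and "neg_def_mat (four_block_mat
           (P * (\<kappa> \<cdot>\<^sub>m 1\<^sub>m (2*n) + A_mat n) + transpose_mat (\<kappa> \<cdot>\<^sub>m 1\<^sub>m (2*n) + A_mat n) * P
              + 1\<^sub>m (2*n) - W * C_mat n - transpose_mat (C_mat n) * transpose_mat W)
           (P * E_mat n)
           (transpose_mat (E_mat n) * P)
           (- (\<gamma>^2 \<cdot>\<^sub>m 1\<^sub>m n)))"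
    and "P11 \<in> carrier_mat n n" and "P12 \<in> carrier_mat n n" and "P22 \<in> carrier_mat n n"
    and "P = four_block_mat P11 P12 (transpose_mat P12) P22"
  shows "pos_def_mat P11 \<and> pos_def_mat P22 \<and> det P12 \<noteq> 0 \<and> hurwitz_mat P12"
proof -
  note blocks = assms(8-10)
  have "P * E_mat n \<in> carrier_mat (2 * n) n" "transpose_mat (E_mat n) * P \<in> carrier_mat n (2 * n)"
    "- (\<gamma>^2 \<cdot>\<^sub>m 1\<^sub>m n) \<in> carrier_mat n n"
    using assms(4) E_mat_carrier[of n] by auto
  then have "neg_def_mat (Lambda_mat n \<kappa> P W)"
    by (rule neg_def_mat_four_block_mat[OF assms(7)[folded Lambda_mat_def] Lambda_mat_carrier[OF assms(4,6)]])
  then have P12_neg: "\<forall>x \<in> carrier_vec n. x \<noteq> 0\<^sub>v n \<longrightarrow> x \<bullet> (P12 *\<^sub>v x) < 0"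
    using off_diagonal_block_quadratic_form_neg[OF assms(2,11,5) blocks assms(6)] by blast
  have "transpose_mat P12 \<in> carrier_mat n n" using blocks(2) by simp
  note P_blocks_pos = pos_def_mat_four_block_mat[OF assms(5)[unfolded assms(11)] blocks(1,2) this blocks(3)]
  show ?thesis
    using P_blocks_pos det_neq_zero_if_quadratic_form_neg[OF blocks(2) P12_neg]
      hurwitz_mat_if_quadratic_form_neg[OF blocks(2) P12_neg] by blast
qed

end
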